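(* Let $1<p<\infty$, let $q$ be defined by $\frac1p+\frac1q=1$, and let $0<\gamma<3^{-\frac1q}$. Let $(x^*_j)$ be a normalized block basis of $(e_j^* )$ in the dual space $Ti^*(p,\gamma)$. Then for every $n\in\mathbb{N}$ and every choice of real numbers $(a_j)_{j=1}^n$, $$\left\|\sum_{j=1}^n a_jx_j^*\right\|\ge \frac1{3^{\frac1q}}\left(\sum_{j=1}^n|a_j|^q\right)^{\frac1q}.$$
   Context: For $1<p<\infty$, $\frac1p+\frac1q=1$ and $0<\gamma<1$, the Tirilman space $Ti(p,\gamma)$ is the completion of $c_{00}$ (finitely supported real sequences) under the norm defined implicitly by $$\|a\|=\max\Big\{\|a\|_\infty,\ \gamma\sup\frac{\sum_{j=1}^n\|E_ja\|}{n^{1/q}}\Big\},$$ where the supremum is over all $n\in\mathbb{N}$ and all finite sets of consecutive natural numbers $E_1<\dots<E_n$ (meaning $\max E_i<\min E_{i+1}$), and $E_ja$ denotes the restriction of $a$ to $E_j$. The unit vectors $(e_n)$ form a 1-subsymmetric basis of $Ti(p,\gamma)$; $(e_n^* )$ denotes the biorthogonal functionals, which form a basis of the dual $Ti^*(p,\gamma)$. A block basis of $(e^*_n)$ is a sequence of nonzero vectors $y_n=\sum_{k=p_n+1}^{p_{n+1}}a_ke^*_k$ with $p_1<p_2<\cdots$. *)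

theory Defs
  imports Complex_Main
begin

definition c00 :: "(nat \<Rightarrow> real) set" where
  "c00 = {a. finite {k. a k \<noteq> 0}}"

definition conj_exp :: "real \<Rightarrow> real" where
  "conj_exp p = p / (p - 1)"

definition supnorm :: "(nat \<Rightarrow> real) \<Rightarrow> real" where
  "supnorm a = (SUP k. \<bar>a k\<bar>)"

definition restr :: "nat set \<Rightarrow> (nat \<Rightarrow> real) \<Rightarrow> nat \<Rightarrow> real" where
  "restr E a = (\<lambda>k. if k \<in> E then a k else 0)"

text \<open>Admissible families: n \<ge> 1 nonempty intervals E_j = {l j..r j}, j<n, with E_0 < E_1 < ... < E_(n-1).\<close>
definition adm :: "nat \<Rightarrow> (nat \<Rightarrow> nat) \<Rightarrow> (nat \<Rightarrow> nat) \<Rightarrow> bool" where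
  "adm n l r \<longleftrightarrow> n \<ge> 1 \<and> (\<forall>j<n. l j \<le> r j) \<and> (\<forall>j. Suc j < n \<longrightarrow> r j < l (Suc j))"

text \<open>Standard iterative construction of the implicitly defined norm.\<close>
fun ti_iter :: "real \<Rightarrow> real \<Rightarrow> nat \<Rightarrow> (nat \<Rightarrow> real) \<Rightarrow> real" where
  "ti_iter p \<gamma> 0 a = supnorm a"
| "ti_iter p \<gamma> (Suc m) a = max (supnorm a)
     (\<gamma> * (SUP nlr \<in> {(n, l, r). adm n l r}.
        (case nlr of (n, l, r) \<Rightarrow>
          (\<Sum>j<n. ti_iter p \<gamma> m (restr {l j..r j} a)) / real n powr (1 / conj_exp p))))"

definition ti_norm :: "real \<Rightarrow> real \<Rightarrow> (nat \<Rightarrow> real) \<Rightarrow> real" where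
  "ti_norm p \<gamma> a = (SUP m. ti_iter p \<gamma> m a)"

text \<open>Dual norm of a finitely supported functional f = sum_k f k e_k^*
  (c00 is dense in Ti(p,gamma), so the sup over c00 is the dual norm).\<close>
definition ti_dual_norm :: "real \<Rightarrow> real \<Rightarrow> (nat \<Rightarrow> real) \<Rightarrow> real" where
  "ti_dual_norm p \<gamma> f = (SUP a \<in> {a \<in> c00. ti_norm p \<gamma> a \<le> 1}.
      \<bar>\<Sum>k\<in>{k. f k \<noteq> 0}. f k * a k\<bar>)"

definition is_block_basis :: "(nat \<Rightarrow> nat \<Rightarrow> real) \<Rightarrow> bool" where
  "is_block_basis x \<longleftrightarrow> (\<exists>pp :: nat \<Rightarrow> nat. strict_mono pp \<and>
      (\<forall>j k. x j k \<noteq> 0 \<longrightarrow> pp j < k \<and> k \<le> pp (Suc j)) \<and> (\<forall>j. x j \<noteq> (\<lambda>_. 0)))"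

end

theory Submission
  imports Defs "HOL-Analysis.Analysis"
begin

(* The norm is the supremum of the iterates ti_iter m. By induction on m, if gamma 3^(1/q) <= 1,
   a vector v supported on finitely many blocks B_j (consecutive intervals) with norm(B_j v) <= s_j
   has norm at most 3^(1/q) (sum_j s_j^p)^(1/p): an interval of an admissible family E_1 < ... < E_n
   contains some blocks, which the induction hypothesis handles, and cuts at most two others, and
   the pieces cut out of one block by the E_i form an admissible family of their own. Hoelder's
   inequality over these at most 3n terms gives the factor (3n)^(1/q).
   The lower q-estimate for normalized blocks x_j of the dual basis follows by duality: if y_j
   norms x_j up to a factor z < 1, then the vector sum_j c_j y_j with the Hoelder-extremal
   coefficients c_j = sgn(a_j <x_j, y_j>) |a_j|^(q-1) has norm at most 3^(1/q) (sum_j |a_j|^q)^(1/p)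
   by the upper estimate, while its pairing with sum_j a_j x_j is at least z sum_j |a_j|^q. *)

section \<open>Finitely supported sequences and admissible families\<close>

lemma restr_in_c00: "a \<in> c00 \<Longrightarrow> restr E a \<in> c00"
  unfolding c00_def restr_def by (auto elim: rev_finite_subset)

lemma restr_restr: "restr E (restr F a) = restr (E \<inter> F) a"
  unfolding restr_def by auto

lemma zero_in_c00: "(\<lambda>_. 0) \<in> c00"
  unfolding c00_def by simp

lemma sum_in_c00:
  assumes "finite T" "\<And>t. t \<in> T \<Longrightarrow> u t \<in> c00"
  shows "(\<lambda>k. \<Sum>t\<in>T. \<alpha> t * u t k) \<in> c00"
proof -
  have "{k. (\<Sum>t\<in>T. \<alpha> t * u t k) \<noteq> 0} \<subseteq> (\<Union>t\<in>T. {k. u t k \<noteq> 0})"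
  proof
    fix k assume "k \<in> {k. (\<Sum>t\<in>T. \<alpha> t * u t k) \<noteq> 0}"
    then obtain t where "t \<in> T" "\<alpha> t * u t k \<noteq> 0"
      by (auto elim: sum.not_neutral_contains_not_neutral)
    then show "k \<in> (\<Union>t\<in>T. {k. u t k \<noteq> 0})" by auto
  qed
  moreover have "finite (\<Union>t\<in>T. {k. u t k \<noteq> 0})"
    using assms unfolding c00_def by auto
  ultimately show ?thesis
    unfolding c00_def by (auto elim: rev_finite_subset)
qed

lemma bdd_above_abs_c00: "a \<in> c00 \<Longrightarrow> bdd_above (range (\<lambda>k. \<bar>a k\<bar>))"
proof -
  assume "a \<in> c00"
  then have "finite (insert 0 ((\<lambda>k. \<bar>a k\<bar>) ` {k. a k \<noteq> 0}))"
    unfolding c00_def by auto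
  moreover have "range (\<lambda>k. \<bar>a k\<bar>) \<subseteq> insert 0 ((\<lambda>k. \<bar>a k\<bar>) ` {k. a k \<noteq> 0})"
    by auto
  ultimately show ?thesis by (meson bdd_above_finite bdd_above_mono)
qed

lemma abs_le_supnorm: "a \<in> c00 \<Longrightarrow> \<bar>a k\<bar> \<le> supnorm a"
  unfolding supnorm_def by (rule cSUP_upper[OF _ bdd_above_abs_c00]) auto

lemma supnorm_nonneg: "a \<in> c00 \<Longrightarrow> 0 \<le> supnorm a"
  using abs_le_supnorm[of a 0] by auto

(* A crude bound that makes the suprema defining ti_iter and ti_norm finite. *)
definition l1_norm :: "(nat \<Rightarrow> real) \<Rightarrow> real" where
  "l1_norm a = (\<Sum>k\<in>{k. a k \<noteq> 0}. \<bar>a k\<bar>)"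

lemma l1_norm_nonneg: "0 \<le> l1_norm a"
  unfolding l1_norm_def by (simp add: sum_nonneg)

lemma abs_le_l1_norm: "a \<in> c00 \<Longrightarrow> \<bar>a k\<bar> \<le> l1_norm a"
  unfolding l1_norm_def c00_def
  by (cases "a k = 0") (auto simp: sum_nonneg intro: member_le_sum)

lemma supnorm_le_l1_norm: "a \<in> c00 \<Longrightarrow> supnorm a \<le> l1_norm a"
  unfolding supnorm_def by (intro cSUP_least) (auto intro: abs_le_l1_norm)

lemma adm_less:
  assumes "adm n l r" "i < i'" "i' < n"
  shows "r i < l i'"
  using assms(2,3)
proof (induction i')
  case (Suc i')
  have "r i' < l (Suc i')" "l i' \<le> r i'"
    using assms(1) Suc.prems unfolding adm_def by auto
  with Suc show ?case
    by (cases "i = i'") auto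
qed simp

lemma adm_interval_unique:
  assumes "adm n l r" "i < n" "i' < n" "k \<in> {l i..r i}" "k \<in> {l i'..r i'}"
  shows "i = i'"
  using assms adm_less[OF assms(1) _ assms(2), of i'] adm_less[OF assms(1) _ assms(3), of i]
  by (cases i i' rule: linorder_cases) auto

lemma sum_l1_norm_restr_le:
  assumes "a \<in> c00" "adm n l r"
  shows "(\<Sum>i<n. l1_norm (restr {l i..r i} a)) \<le> l1_norm a"
proof -
  let ?S = "{k. a k \<noteq> 0}"
  have fin: "finite ?S" using assms(1) unfolding c00_def by auto
  have "l1_norm (restr {l i..r i} a) = (\<Sum>k\<in>?S \<inter> {l i..r i}. \<bar>a k\<bar>)" for i
    unfolding l1_norm_def restr_def by (rule sum.cong) auto
  then have "(\<Sum>i<n. l1_norm (restr {l i..r i} a)) = (\<Sum>i<n. \<Sum>k\<in>?S \<inter> {l i..r i}. \<bar>a k\<bar>)"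
    by simp
  also have "\<dots> = (\<Sum>k\<in>(\<Union>i<n. ?S \<inter> {l i..r i}). \<bar>a k\<bar>)"
    using fin adm_interval_unique[OF assms(2)] by (intro sum.UNION_disjoint[symmetric]) blast+
  also have "\<dots> \<le> l1_norm a"
    unfolding l1_norm_def by (rule sum_mono2[OF fin]) auto
  finally show ?thesis .
qed

section \<open>Hoelder-type inequalities\<close>

lemma sum_powr_mult_powr_le:
  fixes u v :: "'a \<Rightarrow> real" and \<alpha> \<beta> :: real
  assumes X: "finite X" and \<alpha>\<beta>: "0 < \<alpha>" "0 < \<beta>" "\<alpha> + \<beta> = 1"
    and nonneg: "\<And>x. x \<in> X \<Longrightarrow> 0 \<le> u x" "\<And>x. x \<in> X \<Longrightarrow> 0 \<le> v x"
  shows "(\<Sum>x\<in>X. u x powr \<alpha> * v x powr \<beta>) \<le> (\<Sum>x\<in>X. u x) powr \<alpha> * (\<Sum>x\<in>X. v x) powr \<beta>"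
proof -
  define U where "U = (\<Sum>x\<in>X. u x)"
  define V where "V = (\<Sum>x\<in>X. v x)"
  show ?thesis
  proof (cases "U = 0 \<or> V = 0")
    case True
    then have "\<forall>x\<in>X. u x = 0 \<or> v x = 0"
      using X nonneg unfolding U_def V_def by (auto simp: sum_nonneg_eq_0_iff)
    then have "(\<Sum>x\<in>X. u x powr \<alpha> * v x powr \<beta>) = 0"
      by (intro sum.neutral) auto
    then show ?thesis by simp
  next
    case False
    then have UV: "0 < U" "0 < V"
      using nonneg unfolding U_def V_def by (simp_all add: less_le sum_nonneg)
    have Young: "u x powr \<alpha> * v x powr \<beta> \<le> U powr \<alpha> * V powr \<beta> * (\<alpha> * (u x / U) + \<beta> * (v x / V))"
      if "x \<in> X" for x
    proof (cases "u x = 0 \<or> v x = 0")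
      case True
      then show ?thesis using UV \<alpha>\<beta> nonneg[OF that] by auto
    next
      case False
      then have "(u x / U) powr \<alpha> * (v x / V) powr \<beta> \<le> \<alpha> * (u x / U) + \<beta> * (v x / V)"
        using UV \<alpha>\<beta> nonneg[OF that] by (intro Youngs_inequality_0) auto
      then show ?thesis
        using UV by (simp add: powr_divide field_simps)
    qed
    have "(\<Sum>x\<in>X. u x powr \<alpha> * v x powr \<beta>)
        \<le> (\<Sum>x\<in>X. U powr \<alpha> * V powr \<beta> * (\<alpha> * (u x / U) + \<beta> * (v x / V)))"
      using Young by (rule sum_mono)
    also have "\<dots> = U powr \<alpha> * V powr \<beta> * (\<alpha> * ((\<Sum>x\<in>X. u x) / U) + \<beta> * ((\<Sum>x\<in>X. v x) / V))"
      by (simp add: sum_distrib_left[symmetric] sum_divide_distrib[symmetric] sum.distrib)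
    also have "\<dots> = U powr \<alpha> * V powr \<beta>"
      using UV \<alpha>\<beta> unfolding U_def[symmetric] V_def[symmetric] by simp
    finally show ?thesis unfolding U_def V_def .
  qed
qed

lemma powr_mult_powr_add_le:
  fixes \<alpha> \<beta> u1 u2 v1 v2 :: real
  assumes "0 < \<alpha>" "0 < \<beta>" "\<alpha> + \<beta> = 1" "0 \<le> u1" "0 \<le> u2" "0 \<le> v1" "0 \<le> v2"
  shows "u1 powr \<alpha> * v1 powr \<beta> + u2 powr \<alpha> * v2 powr \<beta> \<le> (u1 + u2) powr \<alpha> * (v1 + v2) powr \<beta>"
  using sum_powr_mult_powr_le[of "{False, True}" \<alpha> \<beta> "\<lambda>b. if b then u1 else u2" "\<lambda>b. if b then v1 else v2"]
    assms by (simp add: add.commute)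

lemma sum_disjoint_subsets_le:
  fixes f :: "'a \<Rightarrow> real"
  assumes "finite J" "J0 \<subseteq> J" "finite I" "\<And>i. i \<in> I \<Longrightarrow> F i \<subseteq> J" "disjoint_family_on F I"
    "\<And>i. i \<in> I \<Longrightarrow> J0 \<inter> F i = {}" "\<And>j. j \<in> J \<Longrightarrow> 0 \<le> f j"
  shows "(\<Sum>j\<in>J0. f j) + (\<Sum>i\<in>I. \<Sum>j\<in>F i. f j) \<le> (\<Sum>j\<in>J. f j)"
proof -
  have fin: "finite J0" "\<And>i. i \<in> I \<Longrightarrow> finite (F i)"
    using assms(1,2,4) finite_subset by blast+
  have "(\<Sum>j\<in>J0. f j) + (\<Sum>i\<in>I. \<Sum>j\<in>F i. f j) = (\<Sum>j\<in>J0 \<union> (\<Union>i\<in>I. F i). f j)"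
    using fin assms(3,5,6) by (subst sum.union_disjoint) (auto simp: sum.UNION_disjoint_family)
  also have "\<dots> \<le> (\<Sum>j\<in>J. f j)"
    using assms by (intro sum_mono2) auto
  finally show ?thesis .
qed

lemma sum_powr_split_le:
  fixes s c :: "nat \<Rightarrow> real" and F :: "nat \<Rightarrow> nat set" and p C :: real
  assumes p: "1 < p" and J: "finite J" and I: "finite I"
    and nonneg: "\<And>j. j \<in> J \<Longrightarrow> 0 \<le> s j" "\<And>j. j \<in> J \<Longrightarrow> 0 \<le> c j"
    and F: "\<And>i. i \<in> I \<Longrightarrow> F i \<subseteq> J" "disjoint_family_on F I"
    and c_zero: "\<And>i j. i \<in> I \<Longrightarrow> j \<in> F i \<Longrightarrow> c j = 0"
    and c_sum: "(\<Sum>j\<in>J. c j) \<le> C"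
  shows "(\<Sum>j\<in>J. c j powr (1 - 1/p) * s j) + (\<Sum>i\<in>I. (\<Sum>j\<in>F i. s j powr p) powr (1/p))
    \<le> (C + card I) powr (1 - 1/p) * (\<Sum>j\<in>J. s j powr p) powr (1/p)"
proof -
  define J1 where "J1 = {j\<in>J. c j \<noteq> 0}"
  define t where "t i = (\<Sum>j\<in>F i. s j powr p) powr (1/p)" for i
  have exps: "0 < 1/p" "0 < 1 - 1/p" "1/p + (1 - 1/p) = 1"
    using p by auto
  have J1: "finite J1" "J1 \<subseteq> J"
    using J unfolding J1_def by auto
  have root_powr: "(x powr p) powr (1/p) = x" if "0 \<le> x" for x
    using that p by (simp add: powr_powr)
  have "(\<Sum>j\<in>J. c j powr (1 - 1/p) * s j) = (\<Sum>j\<in>J1. (s j powr p) powr (1/p) * c j powr (1 - 1/p))"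
    using J J1 nonneg root_powr by (intro sum.mono_neutral_cong_right) (auto simp: J1_def)
  also have "\<dots> \<le> (\<Sum>j\<in>J1. s j powr p) powr (1/p) * (\<Sum>j\<in>J1. c j) powr (1 - 1/p)"
    using J1 nonneg exps by (intro sum_powr_mult_powr_le) auto
  finally have part1: "(\<Sum>j\<in>J. c j powr (1 - 1/p) * s j)
      \<le> (\<Sum>j\<in>J1. s j powr p) powr (1/p) * (\<Sum>j\<in>J1. c j) powr (1 - 1/p)" .
  have "(\<Sum>i\<in>I. t i) = (\<Sum>i\<in>I. (t i powr p) powr (1/p) * 1 powr (1 - 1/p))"
    by (simp add: root_powr t_def)
  also have "\<dots> \<le> (\<Sum>i\<in>I. t i powr p) powr (1/p) * (\<Sum>i\<in>I. 1) powr (1 - 1/p)"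
    using I exps by (intro sum_powr_mult_powr_le) auto
  finally have part2: "(\<Sum>i\<in>I. t i) \<le> (\<Sum>i\<in>I. t i powr p) powr (1/p) * real (card I) powr (1 - 1/p)"
    by simp
  have "(\<Sum>j\<in>J1. s j powr p) + (\<Sum>i\<in>I. t i powr p) = (\<Sum>j\<in>J1. s j powr p) + (\<Sum>i\<in>I. \<Sum>j\<in>F i. s j powr p)"
    using p unfolding t_def by (simp add: powr_powr sum_nonneg)
  also have "\<dots> \<le> (\<Sum>j\<in>J. s j powr p)"
    using J J1 I F c_zero by (intro sum_disjoint_subsets_le) (auto simp: J1_def)
  finally have X: "(\<Sum>j\<in>J1. s j powr p) + (\<Sum>i\<in>I. t i powr p) \<le> (\<Sum>j\<in>J. s j powr p)" .
  have "(\<Sum>j\<in>J1. c j) = (\<Sum>j\<in>J. c j)"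
    using J J1 by (intro sum.mono_neutral_left) (auto simp: J1_def)
  then have Y: "(\<Sum>j\<in>J1. c j) + real (card I) \<le> C + card I"
    using c_sum by simp
  have c_J1: "0 \<le> (\<Sum>j\<in>J1. c j)"
    using J1 nonneg by (auto intro!: sum_nonneg)
  have "(\<Sum>j\<in>J. c j powr (1 - 1/p) * s j) + (\<Sum>i\<in>I. t i)
      \<le> (\<Sum>j\<in>J1. s j powr p) powr (1/p) * (\<Sum>j\<in>J1. c j) powr (1 - 1/p)
        + (\<Sum>i\<in>I. t i powr p) powr (1/p) * real (card I) powr (1 - 1/p)"
    using part1 part2 by (rule add_mono)
  also have "\<dots> \<le> ((\<Sum>j\<in>J1. s j powr p) + (\<Sum>i\<in>I. t i powr p)) powr (1/p)
      * ((\<Sum>j\<in>J1. c j) + real (card I)) powr (1 - 1/p)"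
    using exps c_J1 by (intro powr_mult_powr_add_le) (auto simp: sum_nonneg)
  also have "\<dots> \<le> (\<Sum>j\<in>J. s j powr p) powr (1/p) * (C + card I) powr (1 - 1/p)"
  proof (rule mult_mono)
    show "((\<Sum>j\<in>J1. s j powr p) + (\<Sum>i\<in>I. t i powr p)) powr (1/p) \<le> (\<Sum>j\<in>J. s j powr p) powr (1/p)"
      using X exps by (intro powr_mono2) (auto simp: sum_nonneg)
    show "((\<Sum>j\<in>J1. c j) + real (card I)) powr (1 - 1/p) \<le> (C + card I) powr (1 - 1/p)"
      using Y c_J1 exps by (intro powr_mono2) auto
  qed simp_all
  finally show ?thesis
    unfolding t_def by (simp add: mult.commute)
qed

lemma mult_sgn_mult_abs_powr:
  fixes t \<pi> q :: real
  shows "t * (sgn (t * \<pi>) * \<bar>t\<bar> powr (q - 1)) * \<pi> = \<bar>t\<bar> powr q * \<bar>\<pi>\<bar>"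
proof (cases "t = 0")
  case False
  have "t * (sgn (t * \<pi>) * \<bar>t\<bar> powr (q - 1)) * \<pi> = \<bar>t * \<pi>\<bar> * \<bar>t\<bar> powr (q - 1)"
    by (subst abs_sgn) (simp add: mult_ac)
  also have "\<dots> = (\<bar>t\<bar> * \<bar>t\<bar> powr (q - 1)) * \<bar>\<pi>\<bar>"
    by (simp add: abs_mult)
  also have "\<bar>t\<bar> * \<bar>t\<bar> powr (q - 1) = \<bar>t\<bar> powr q"
    using False by (simp add: powr_mult_base)
  finally show ?thesis .
qed simp

lemma conj_exp_minus_1_mult: "1 < p \<Longrightarrow> (conj_exp p - 1) * p = conj_exp p"
  unfolding conj_exp_def by (simp add: field_simps)

lemma abs_sgn_mult_powr_conj_exp:
  fixes t \<pi> p :: real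
  assumes "1 < p" "\<pi> \<noteq> 0"
  shows "\<bar>sgn (t * \<pi>) * \<bar>t\<bar> powr (conj_exp p - 1)\<bar> powr p = \<bar>t\<bar> powr conj_exp p"
proof -
  have "\<bar>sgn (t * \<pi>) * \<bar>t\<bar> powr (conj_exp p - 1)\<bar> = \<bar>t\<bar> powr (conj_exp p - 1)"
    using assms(2) by (cases "t = 0") (auto simp: abs_mult abs_sgn_eq)
  then show ?thesis
    using assms(1) by (simp add: powr_powr conj_exp_minus_1_mult)
qed

lemma mult_powr_le_cancel:
  fixes z A C D p :: real
  assumes le: "z * A \<le> D * (C * A powr (1/p))" and "0 \<le> A" "0 \<le> D" "0 < C"
  shows "z * (1 / C * A powr (1 - 1/p)) \<le> D"
proof -
  have "z * A powr (1 - 1/p) \<le> D * C"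
  proof (cases "A = 0")
    case True
    then have "z * A powr (1 - 1/p) = 0"
      by simp
    moreover have "0 \<le> D * C"
      using assms(3,4) by simp
    ultimately show ?thesis
      by linarith
  next
    case False
    then have A_pos: "0 < A"
      using assms(2) by simp
    have "A powr (1/p) * (z * A powr (1 - 1/p)) = z * (A powr (1/p) * A powr (1 - 1/p))"
      by (simp only: mult.left_commute)
    also have "\<dots> = z * A"
      using A_pos by (simp flip: powr_add)
    also have "\<dots> \<le> A powr (1/p) * (D * C)"
      using le by (simp only: mult_ac)
    finally show ?thesis
      using A_pos by simp
  qed
  then show ?thesis
    using assms(4) by (simp add: pos_divide_le_eq)
qed

section \<open>The iterates of the norm and the dual norm\<close>

definition dual_pairing :: "(nat \<Rightarrow> real) \<Rightarrow> (nat \<Rightarrow> real) \<Rightarrow> real" where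
  "dual_pairing f b = (\<Sum>k\<in>{k. f k \<noteq> 0}. f k * b k)"

lemma dual_pairing_eq_sum:
  assumes "finite S" "{k. f k \<noteq> 0} \<subseteq> S"
  shows "dual_pairing f b = (\<Sum>k\<in>S. f k * b k)"
  unfolding dual_pairing_def using assms by (intro sum.mono_neutral_left) auto

definition adm_families :: "(nat \<times> (nat \<Rightarrow> nat) \<times> (nat \<Rightarrow> nat)) set" where
  "adm_families = {(n, l, r). adm n l r}"

lemma adm_families_nonempty: "adm_families \<noteq> {}"
proof -
  have "(1, \<lambda>_. 0, \<lambda>_. 0) \<in> adm_families"
    unfolding adm_families_def adm_def by auto
  then show ?thesis by blast
qed

locale tirilman =
  fixes p g :: real
  assumes p_gt_1: "1 < p" and g_pos: "0 < g" and g_le_1: "g \<le> 1"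
begin

definition inv_q :: real where
  "inv_q = 1 / conj_exp p"

lemma inv_q_eq: "inv_q = 1 - 1 / p"
  and inv_q_pos: "0 < inv_q"
  using p_gt_1 by (auto simp: inv_q_def conj_exp_def field_simps)

definition family_avg :: "nat \<Rightarrow> (nat \<Rightarrow> real) \<Rightarrow> nat \<times> (nat \<Rightarrow> nat) \<times> (nat \<Rightarrow> nat) \<Rightarrow> real" where
  "family_avg m a = (\<lambda>(n, l, r). (\<Sum>i<n. ti_iter p g m (restr {l i..r i} a)) / real n powr inv_q)"

lemma ti_iter_Suc:
  "ti_iter p g (Suc m) a = max (supnorm a) (g * (SUP F\<in>adm_families. family_avg m a F))"
  by (simp add: adm_families_def family_avg_def inv_q_def)

declare ti_iter.simps(2) [simp del]

lemma ti_iter_nonneg: "a \<in> c00 \<Longrightarrow> 0 \<le> ti_iter p g m a"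
  by (cases m) (auto simp: ti_iter_Suc supnorm_nonneg intro: max.coboundedI1)

lemma family_avg_le_l1_norm:
  assumes a: "a \<in> c00" and F: "F \<in> adm_families"
    and le_l1: "\<And>b. b \<in> c00 \<Longrightarrow> ti_iter p g m b \<le> l1_norm b"
  shows "family_avg m a F \<le> l1_norm a"
proof -
  obtain n l r where F_eq: "F = (n, l, r)" and adm: "adm n l r"
    using F unfolding adm_families_def by auto
  have "1 \<le> real n powr inv_q"
    using adm inv_q_pos unfolding adm_def by (auto intro: ge_one_powr_ge_zero)
  moreover have "0 \<le> (\<Sum>i<n. ti_iter p g m (restr {l i..r i} a))"
    using a by (intro sum_nonneg ti_iter_nonneg restr_in_c00)
  ultimately have "family_avg m a F \<le> (\<Sum>i<n. ti_iter p g m (restr {l i..r i} a)) / 1"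
    unfolding F_eq family_avg_def prod.case using adm by (intro divide_left_mono) (auto simp: adm_def)
  also have "\<dots> \<le> (\<Sum>i<n. l1_norm (restr {l i..r i} a))"
    using a by (simp add: sum_mono le_l1 restr_in_c00)
  also have "\<dots> \<le> l1_norm a"
    using a adm by (rule sum_l1_norm_restr_le)
  finally show ?thesis .
qed

lemma ti_iter_le_l1_norm: "a \<in> c00 \<Longrightarrow> ti_iter p g m a \<le> l1_norm a"
proof (induction m arbitrary: a)
  case 0
  then show ?case by (simp add: supnorm_le_l1_norm)
next
  case (Suc m)
  have "(SUP F\<in>adm_families. family_avg m a F) \<le> l1_norm a"
    using Suc by (intro cSUP_least adm_families_nonempty family_avg_le_l1_norm)
  then have "g * (SUP F\<in>adm_families. family_avg m a F) \<le> g * l1_norm a"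
    using g_pos by simp
  also have "\<dots> \<le> l1_norm a"
    using g_pos g_le_1 l1_norm_nonneg[of a] by (simp add: mult_left_le_one_le)
  finally have "g * (SUP F\<in>adm_families. family_avg m a F) \<le> l1_norm a" .
  then show ?case
    using Suc.prems by (simp add: ti_iter_Suc supnorm_le_l1_norm)
qed

lemma bdd_above_family_avg: "a \<in> c00 \<Longrightarrow> bdd_above (family_avg m a ` adm_families)"
  by (rule bdd_aboveI2[where M = "l1_norm a"]) (auto intro: family_avg_le_l1_norm ti_iter_le_l1_norm)

lemma family_avg_le_ti_iter_Suc:
  "a \<in> c00 \<Longrightarrow> F \<in> adm_families \<Longrightarrow> g * family_avg m a F \<le> ti_iter p g (Suc m) a"
  unfolding ti_iter_Suc using g_pos
  by (intro max.coboundedI2 mult_left_mono cSUP_upper bdd_above_family_avg) auto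

lemma g_mult_SUP_family_avg_le:
  assumes "\<And>F. F \<in> adm_families \<Longrightarrow> g * family_avg m a F \<le> B"
  shows "g * (SUP F\<in>adm_families. family_avg m a F) \<le> B"
proof -
  have "(SUP F\<in>adm_families. family_avg m a F) \<le> B / g"
    using assms by (intro cSUP_least adm_families_nonempty) (simp add: pos_le_divide_eq[OF g_pos] mult.commute)
  then show ?thesis
    by (simp add: pos_le_divide_eq[OF g_pos] mult.commute)
qed

lemma ti_iter_le_ti_norm: "a \<in> c00 \<Longrightarrow> ti_iter p g m a \<le> ti_norm p g a"
  unfolding ti_norm_def
  by (intro cSUP_upper bdd_aboveI2[where M = "l1_norm a"] ti_iter_le_l1_norm) auto

lemma abs_le_ti_norm: "a \<in> c00 \<Longrightarrow> \<bar>a k\<bar> \<le> ti_norm p g a"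
  using abs_le_supnorm ti_iter_le_ti_norm[of a 0] by (metis ti_iter.simps(1) order_trans)

lemma ti_norm_le: "(\<And>m. ti_iter p g m a \<le> B) \<Longrightarrow> ti_norm p g a \<le> B"
  unfolding ti_norm_def by (intro cSUP_least) auto

lemma ti_norm_nonneg: "a \<in> c00 \<Longrightarrow> 0 \<le> ti_norm p g a"
  using ti_iter_nonneg ti_iter_le_ti_norm order_trans by blast

lemma supnorm_le_weighted_sum:
  assumes "finite T" "\<And>t. t \<in> T \<Longrightarrow> w t \<in> c00" "\<And>t. t \<in> T \<Longrightarrow> 0 \<le> \<alpha> t"
    and "\<And>k. \<bar>u k\<bar> \<le> (\<Sum>t\<in>T. \<alpha> t * \<bar>w t k\<bar>)"
  shows "supnorm u \<le> (\<Sum>t\<in>T. \<alpha> t * supnorm (w t))"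
  unfolding supnorm_def[of u]
proof (rule cSUP_least)
  fix k
  have "\<bar>u k\<bar> \<le> (\<Sum>t\<in>T. \<alpha> t * \<bar>w t k\<bar>)" by (rule assms(4))
  also have "\<dots> \<le> (\<Sum>t\<in>T. \<alpha> t * supnorm (w t))"
    using assms by (intro sum_mono mult_left_mono abs_le_supnorm) auto
  finally show "\<bar>u k\<bar> \<le> (\<Sum>t\<in>T. \<alpha> t * supnorm (w t))" .
qed auto

lemma ti_iter_le_weighted_sum:
  assumes T: "finite T" "\<And>t. t \<in> T \<Longrightarrow> 0 \<le> \<alpha> t"
  shows "(\<And>t. t \<in> T \<Longrightarrow> w t \<in> c00) \<Longrightarrow> (\<And>k. \<bar>u k\<bar> \<le> (\<Sum>t\<in>T. \<alpha> t * \<bar>w t k\<bar>))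
    \<Longrightarrow> ti_iter p g m u \<le> (\<Sum>t\<in>T. \<alpha> t * ti_iter p g m (w t))"
proof (induction m arbitrary: u w)
  case 0
  then show ?case using supnorm_le_weighted_sum[OF T(1) _ T(2)] by simp
next
  case (Suc m)
  have "g * family_avg m u F \<le> (\<Sum>t\<in>T. \<alpha> t * ti_iter p g (Suc m) (w t))"
    if F: "F \<in> adm_families" for F
  proof -
    obtain n l r where F_eq: "F = (n, l, r)" by (cases F)
    have "(\<Sum>i<n. ti_iter p g m (restr {l i..r i} u))
        \<le> (\<Sum>i<n. \<Sum>t\<in>T. \<alpha> t * ti_iter p g m (restr {l i..r i} (w t)))"
      using Suc T(2) by (intro sum_mono Suc.IH restr_in_c00) (auto simp: restr_def sum_nonneg)
    also have "\<dots> = (\<Sum>t\<in>T. \<alpha> t * (\<Sum>i<n. ti_iter p g m (restr {l i..r i} (w t))))"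
      by (subst sum.swap) (simp add: sum_distrib_left)
    finally have "family_avg m u F \<le> (\<Sum>t\<in>T. \<alpha> t * family_avg m (w t) F)"
      unfolding F_eq family_avg_def
      by (simp add: divide_right_mono sum_divide_distrib[symmetric] times_divide_eq_right)
    then have "g * family_avg m u F \<le> g * (\<Sum>t\<in>T. \<alpha> t * family_avg m (w t) F)"
      using g_pos by (rule mult_left_mono[OF _ less_imp_le])
    also have "\<dots> = (\<Sum>t\<in>T. \<alpha> t * (g * family_avg m (w t) F))"
      by (simp add: sum_distrib_left mult.left_commute)
    also have "\<dots> \<le> (\<Sum>t\<in>T. \<alpha> t * ti_iter p g (Suc m) (w t))"
      using Suc.prems T(2) F by (intro sum_mono mult_left_mono family_avg_le_ti_iter_Suc) auto
    finally show ?thesis .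
  qed
  then have "g * (SUP F\<in>adm_families. family_avg m u F) \<le> (\<Sum>t\<in>T. \<alpha> t * ti_iter p g (Suc m) (w t))"
    by (rule g_mult_SUP_family_avg_le)
  moreover have "supnorm u \<le> (\<Sum>t\<in>T. \<alpha> t * ti_iter p g (Suc m) (w t))"
  proof -
    have "supnorm u \<le> (\<Sum>t\<in>T. \<alpha> t * supnorm (w t))"
      using supnorm_le_weighted_sum[OF T(1) _ T(2)] Suc.prems by simp
    also have "\<dots> \<le> (\<Sum>t\<in>T. \<alpha> t * ti_iter p g (Suc m) (w t))"
      using T(2) unfolding ti_iter_Suc by (intro sum_mono mult_left_mono) auto
    finally show ?thesis .
  qed
  ultimately show ?case
    unfolding ti_iter_Suc[of m u] by simp
qed

lemma ti_iter_le_scaled: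
  assumes "w \<in> c00" "0 \<le> \<alpha>" "\<And>k. \<bar>u k\<bar> \<le> \<alpha> * \<bar>w k\<bar>"
  shows "ti_iter p g m u \<le> \<alpha> * ti_iter p g m w"
  using ti_iter_le_weighted_sum[of "{()}" "\<lambda>_. \<alpha>" "\<lambda>_. w" u m] assms by simp

lemma ti_iter_le_add_sum:
  assumes "finite T" "w0 \<in> c00" "\<And>t. t \<in> T \<Longrightarrow> w t \<in> c00"
    and "\<And>k. \<bar>u k\<bar> \<le> \<bar>w0 k\<bar> + (\<Sum>t\<in>T. \<bar>w t k\<bar>)"
  shows "ti_iter p g m u \<le> ti_iter p g m w0 + (\<Sum>t\<in>T. ti_iter p g m (w t))"
proof -
  let ?w = "case_option w0 w"
  have sum_option: "(\<Sum>x\<in>insert None (Some ` T). f x) = f None + (\<Sum>t\<in>T. f (Some t))"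
    for f :: "'a option \<Rightarrow> real"
    using assms(1) by (simp add: sum.reindex)
  have "ti_iter p g m u \<le> (\<Sum>x\<in>insert None (Some ` T). 1 * ti_iter p g m (?w x))"
    using assms by (intro ti_iter_le_weighted_sum) (auto simp: sum_option)
  then show ?thesis by (simp add: sum_option)
qed

lemma ti_norm_restr_le:
  assumes "a \<in> c00"
  shows "ti_norm p g (restr E a) \<le> ti_norm p g a"
proof (rule ti_norm_le)
  fix m
  have "ti_iter p g m (restr E a) \<le> 1 * ti_iter p g m a"
    using assms by (intro ti_iter_le_scaled) (auto simp: restr_def)
  then show "ti_iter p g m (restr E a) \<le> ti_norm p g a"
    using ti_iter_le_ti_norm[OF assms, of m] by linarith
qed

lemma ti_iter_Suc_ge_subfamily:
  assumes u: "u \<in> c00" and I: "finite (I :: nat set)" and nonempty: "\<And>i. i \<in> I \<Longrightarrow> l i \<le> r i"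
    and ordered: "\<And>i i'. i \<in> I \<Longrightarrow> i' \<in> I \<Longrightarrow> i < i' \<Longrightarrow> r i < l i'"
  shows "g * (\<Sum>i\<in>I. ti_iter p g m (restr {l i..r i} u)) \<le> real (card I) powr inv_q * ti_iter p g (Suc m) u"
proof (cases "I = {}")
  case False
  define L where "L = sorted_list_of_set I"
  define n where "n = card I"
  have len: "length L = n" and set_L: "set L = I" and sorted: "sorted_wrt (<) L"
    unfolding L_def n_def using I by auto
  have n_pos: "1 \<le> n"
    unfolding n_def using I False by (simp add: Suc_leI card_gt_0_iff)
  have in_I: "L ! j \<in> I" if "j < n" for j
    using that len set_L nth_mem by blast
  have "adm n (\<lambda>j. l (L ! j)) (\<lambda>j. r (L ! j))"
    unfolding adm_def using n_pos nonempty in_I ordered sorted_wrt_nth_less[OF sorted] len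
    by auto
  then have F: "(n, \<lambda>j. l (L ! j), \<lambda>j. r (L ! j)) \<in> adm_families"
    unfolding adm_families_def by simp
  have "bij_betw ((!) L) {..<n} I"
    using bij_betw_nth[of L] len set_L L_def by simp
  from sum.reindex_bij_betw[OF this, of "\<lambda>i. ti_iter p g m (restr {l i..r i} u)"]
  have "(\<Sum>i\<in>I. ti_iter p g m (restr {l i..r i} u)) = (\<Sum>j<n. ti_iter p g m (restr {l (L ! j)..r (L ! j)} u))"
    by simp
  also have "\<dots> = real n powr inv_q * family_avg m u (n, \<lambda>j. l (L ! j), \<lambda>j. r (L ! j))"
    unfolding family_avg_def using n_pos by simp
  finally have "g * (\<Sum>i\<in>I. ti_iter p g m (restr {l i..r i} u))
      = real n powr inv_q * (g * family_avg m u (n, \<lambda>j. l (L ! j), \<lambda>j. r (L ! j)))"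
    by (simp add: algebra_simps)
  also have "\<dots> \<le> real n powr inv_q * ti_iter p g (Suc m) u"
    using family_avg_le_ti_iter_Suc[OF u F] by (intro mult_left_mono) auto
  finally show ?thesis unfolding n_def .
qed simp

lemma ti_norm_zero_le_1: "ti_norm p g (\<lambda>_. 0) \<le> 1"
proof (rule ti_norm_le)
  fix m
  have "ti_iter p g m (\<lambda>_. 0) \<le> 0"
    using ti_iter_le_l1_norm[OF zero_in_c00, of m] by (simp add: l1_norm_def)
  then show "ti_iter p g m (\<lambda>_. 0) \<le> 1" by simp
qed

lemma bdd_above_abs_dual_pairing:
  assumes "finite {k. f k \<noteq> 0}"
  shows "bdd_above ((\<lambda>b. \<bar>dual_pairing f b\<bar>) ` {b \<in> c00. ti_norm p g b \<le> 1})"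
proof (rule bdd_aboveI2)
  fix b assume "b \<in> {b \<in> c00. ti_norm p g b \<le> 1}"
  then have "\<bar>b k\<bar> \<le> 1" for k
    using abs_le_ti_norm[of b k] by auto
  then show "\<bar>dual_pairing f b\<bar> \<le> (\<Sum>k\<in>{k. f k \<noteq> 0}. \<bar>f k\<bar>)"
    unfolding dual_pairing_def
    by (intro order_trans[OF sum_abs] sum_mono) (simp add: abs_mult mult_left_le)
qed

lemma abs_dual_pairing_le_ti_dual_norm:
  assumes "finite {k. f k \<noteq> 0}" "b \<in> c00" "ti_norm p g b \<le> 1"
  shows "\<bar>dual_pairing f b\<bar> \<le> ti_dual_norm p g f"
  unfolding ti_dual_norm_def dual_pairing_def[symmetric]
  using assms by (intro cSUP_upper bdd_above_abs_dual_pairing) auto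

lemma ti_dual_norm_nonneg: "finite {k. f k \<noteq> 0} \<Longrightarrow> 0 \<le> ti_dual_norm p g f"
  using abs_dual_pairing_le_ti_dual_norm[OF _ zero_in_c00 ti_norm_zero_le_1] by fastforce

lemma exists_norming_vector:
  assumes "finite {k. f k \<noteq> 0}" "z < ti_dual_norm p g f"
  obtains b where "b \<in> c00" "ti_norm p g b \<le> 1" "z < \<bar>dual_pairing f b\<bar>"
proof -
  have "(\<lambda>_. 0) \<in> {b \<in> c00. ti_norm p g b \<le> 1}"
    using zero_in_c00 ti_norm_zero_le_1 by simp
  then show ?thesis
    using assms(2) less_cSUP_iff[OF _ bdd_above_abs_dual_pairing[OF assms(1)]] that
    unfolding ti_dual_norm_def dual_pairing_def[symmetric] by blast
qed

lemma ti_norm_scale_le: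
  assumes "b \<in> c00"
  shows "ti_norm p g (\<lambda>k. t * b k) \<le> \<bar>t\<bar> * ti_norm p g b"
proof (rule ti_norm_le)
  fix m
  have "ti_iter p g m (\<lambda>k. t * b k) \<le> \<bar>t\<bar> * ti_iter p g m b"
    using assms by (intro ti_iter_le_scaled) (auto simp: abs_mult)
  also have "\<dots> \<le> \<bar>t\<bar> * ti_norm p g b"
    using ti_iter_le_ti_norm[OF assms] by (intro mult_left_mono) auto
  finally show "ti_iter p g m (\<lambda>k. t * b k) \<le> \<bar>t\<bar> * ti_norm p g b" .
qed

lemma abs_dual_pairing_le:
  assumes f: "finite {k. f k \<noteq> 0}" and b: "b \<in> c00"
  shows "\<bar>dual_pairing f b\<bar> \<le> ti_dual_norm p g f * ti_norm p g b"
proof (cases "ti_norm p g b = 0")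
  case True
  then have "b k = 0" for k
    using abs_le_ti_norm[OF b, of k] by simp
  then show ?thesis
    using True by (simp add: dual_pairing_def)
next
  case False
  define N where "N = ti_norm p g b"
  have N_pos: "0 < N"
    using False ti_norm_nonneg[OF b] unfolding N_def by simp
  have "(\<lambda>k. (1 / N) * b k) \<in> c00"
    using sum_in_c00[of "{()}" "\<lambda>_. b" "\<lambda>_. 1 / N"] b by simp
  moreover have "ti_norm p g (\<lambda>k. (1 / N) * b k) \<le> 1"
    using ti_norm_scale_le[OF b, of "1 / N"] N_pos unfolding N_def by simp
  ultimately have "\<bar>dual_pairing f (\<lambda>k. (1 / N) * b k)\<bar> \<le> ti_dual_norm p g f"
    by (rule abs_dual_pairing_le_ti_dual_norm[OF f])
  moreover have "dual_pairing f (\<lambda>k. (1 / N) * b k) = dual_pairing f b / N"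
    unfolding dual_pairing_def by (simp add: sum_divide_distrib mult.left_commute)
  ultimately have "\<bar>dual_pairing f b\<bar> / N \<le> ti_dual_norm p g f"
    using N_pos by simp
  then show ?thesis
    using N_pos unfolding N_def by (simp add: pos_divide_le_eq)
qed

end

section \<open>Blocks\<close>

locale blocks =
  fixes bl br :: "nat \<Rightarrow> nat"
  assumes bl_le_br: "bl j \<le> br j" and br_less_bl: "j < j' \<Longrightarrow> br j < bl j'"
begin

definition block :: "nat \<Rightarrow> nat set" where
  "block j = {bl j..br j}"

lemma block_unique: "k \<in> block j \<Longrightarrow> k \<in> block j' \<Longrightarrow> j = j'"
  unfolding block_def using br_less_bl[of j j'] br_less_bl[of j' j]
  by (cases j j' rule: linorder_cases) auto

definition supported_on :: "nat set \<Rightarrow> (nat \<Rightarrow> real) \<Rightarrow> bool" where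
  "supported_on J v \<longleftrightarrow> (\<forall>k. v k \<noteq> 0 \<longrightarrow> (\<exists>j\<in>J. k \<in> block j))"

definition inner_blocks :: "nat set \<Rightarrow> nat \<Rightarrow> nat \<Rightarrow> nat set" where
  "inner_blocks J a b = {j\<in>J. block j \<subseteq> {a..b}}"

definition straddling_blocks :: "nat set \<Rightarrow> nat \<Rightarrow> nat \<Rightarrow> nat set" where
  "straddling_blocks J a b = {j\<in>J. {a..b} \<inter> block j \<noteq> {} \<and> \<not> block j \<subseteq> {a..b}}"

lemma card_straddling_blocks_le_2:
  assumes "finite J"
  shows "card (straddling_blocks J a b) \<le> 2"
proof -
  have at_most_one: "card {j\<in>J. x \<in> block j} \<le> Suc 0" for x
    using block_unique assms by (subst card_le_Suc0_iff_eq) auto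
  have "straddling_blocks J a b \<subseteq> {j\<in>J. a \<in> block j} \<union> {j\<in>J. b \<in> block j}"
    unfolding straddling_blocks_def block_def by auto
  then have "card (straddling_blocks J a b) \<le> card ({j\<in>J. a \<in> block j} \<union> {j\<in>J. b \<in> block j})"
    using assms by (intro card_mono) auto
  also have "\<dots> \<le> card {j\<in>J. a \<in> block j} + card {j\<in>J. b \<in> block j}"
    by (rule card_Un_le)
  finally show ?thesis
    using at_most_one[of a] at_most_one[of b] by simp
qed

lemma inner_blocks_disjoint:
  assumes "adm n l r"
  shows "disjoint_family_on (\<lambda>i. inner_blocks J (l i) (r i)) {..<n}"
  unfolding disjoint_family_on_def inner_blocks_def block_def
  using adm_interval_unique[OF assms] bl_le_br by fastforce

lemma inner_not_straddling:
  assumes "adm n l r" "i < n" "i' < n"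
    "j \<in> inner_blocks J (l i) (r i)" "j \<in> straddling_blocks J (l i') (r i')"
  shows False
proof -
  from assms(5) obtain k where k: "k \<in> {l i'..r i'}" "k \<in> block j"
    unfolding straddling_blocks_def by blast
  with assms(4) have "k \<in> {l i..r i}"
    unfolding inner_blocks_def by auto
  with k assms(1-3) have "i = i'"
    by (intro adm_interval_unique) auto
  with assms(4,5) show False
    unfolding inner_blocks_def straddling_blocks_def by auto
qed

lemma sum_card_straddling_le:
  assumes "finite J"
  shows "(\<Sum>j\<in>J. card {i\<in>{..<n}. j \<in> straddling_blocks J (l i) (r i)}) \<le> 2 * n"
proof -
  have "(\<Sum>j\<in>J. card {i\<in>{..<n}. j \<in> straddling_blocks J (l i) (r i)})
      = (\<Sum>i<n. card {j\<in>J. j \<in> straddling_blocks J (l i) (r i)})"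
    using assms sum.swap_restrict[of J "{..<n}" "\<lambda>_ _. 1::nat"
        "\<lambda>j i. j \<in> straddling_blocks J (l i) (r i)"] by simp
  also have "\<dots> \<le> (\<Sum>i<n. 2)"
    using card_straddling_blocks_le_2[OF assms]
    by (intro sum_mono) (simp add: straddling_blocks_def)
  finally show ?thesis by simp
qed

end

section \<open>The upper p-estimate on blocks and the dual lower q-estimate\<close>

locale tirilman_blocks = tirilman + blocks
begin

lemma ti_iter_restr_interval_le:
  assumes v: "v \<in> c00" and J: "finite J" and supp: "supported_on J v"
  shows "ti_iter p g m (restr {a..b} v)
    \<le> ti_iter p g m (restr (\<Union>(block ` inner_blocks J a b)) v)
      + (\<Sum>j\<in>straddling_blocks J a b. ti_iter p g m (restr ({a..b} \<inter> block j) v))"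
proof (rule ti_iter_le_add_sum)
  show "finite (straddling_blocks J a b)"
    using J unfolding straddling_blocks_def by simp
  fix k
  let ?Q = "straddling_blocks J a b"
  have tail_nonneg: "0 \<le> (\<Sum>j\<in>?Q. \<bar>restr ({a..b} \<inter> block j) v k\<bar>)"
    by (simp add: sum_nonneg)
  show "\<bar>restr {a..b} v k\<bar> \<le> \<bar>restr (\<Union>(block ` inner_blocks J a b)) v k\<bar>
      + (\<Sum>j\<in>?Q. \<bar>restr ({a..b} \<inter> block j) v k\<bar>)"
  proof (cases "k \<in> {a..b} \<and> v k \<noteq> 0")
    case False
    then show ?thesis using tail_nonneg by (auto simp: restr_def)
  next
    case True
    then obtain j where j: "j \<in> J" "k \<in> block j"
      using supp unfolding supported_on_def by auto
    show ?thesis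
    proof (cases "block j \<subseteq> {a..b}")
      case True
      then have "k \<in> \<Union>(block ` inner_blocks J a b)"
        using j unfolding inner_blocks_def by auto
      then show ?thesis using tail_nonneg by (simp add: restr_def)
    next
      case False
      then have "j \<in> ?Q"
        using j True unfolding straddling_blocks_def by auto
      have "\<bar>restr {a..b} v k\<bar> = \<bar>restr ({a..b} \<inter> block j) v k\<bar>"
        using j True by (simp add: restr_def)
      also have "\<dots> \<le> (\<Sum>j\<in>?Q. \<bar>restr ({a..b} \<inter> block j) v k\<bar>)"
        using \<open>j \<in> ?Q\<close> \<open>finite ?Q\<close> by (intro member_le_sum) auto
      finally show ?thesis by simp
    qed
  qed
qed (use v in \<open>auto intro: restr_in_c00\<close>)

lemma sum_straddling_pieces_le:
  assumes adm: "adm n l r" and v: "v \<in> c00" and bound: "ti_norm p g (restr (block j) v) \<le> s"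
    and I: "I \<subseteq> {..<n}" "\<And>i. i \<in> I \<Longrightarrow> {l i..r i} \<inter> block j \<noteq> {}"
  shows "g * (\<Sum>i\<in>I. ti_iter p g m (restr ({l i..r i} \<inter> block j) v)) \<le> real (card I) powr inv_q * s"
proof -
  have "restr ({l i..r i} \<inter> block j) v = restr {max (l i) (bl j)..min (r i) (br j)} (restr (block j) v)" for i
    by (simp add: restr_restr block_def max.commute min.commute)
  moreover have "g * (\<Sum>i\<in>I. ti_iter p g m (restr {max (l i) (bl j)..min (r i) (br j)} (restr (block j) v)))
      \<le> real (card I) powr inv_q * ti_iter p g (Suc m) (restr (block j) v)"
  proof (rule ti_iter_Suc_ge_subfamily)
    show "restr (block j) v \<in> c00" using v by (rule restr_in_c00)
    show "finite I" using I(1) finite_nat_iff_bounded by auto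
    show "max (l i) (bl j) \<le> min (r i) (br j)" if "i \<in> I" for i
      using I(2)[OF that] unfolding block_def by auto
    show "min (r i) (br j) < max (l i') (bl j)" if "i \<in> I" "i' \<in> I" "i < i'" for i i'
      using that I(1) adm_less[OF adm, of i i'] by (auto simp: min_less_iff_disj less_max_iff_disj)
  qed
  moreover have "ti_iter p g (Suc m) (restr (block j) v) \<le> s"
    using ti_iter_le_ti_norm[OF restr_in_c00[OF v]] bound by (rule order_trans)
  ultimately show ?thesis
    by (simp add: order_trans[OF _ mult_left_mono])
qed

lemma inner_part_le:
  fixes a b :: nat
  assumes g3: "g * 3 powr inv_q \<le> 1" and v: "v \<in> c00" and J: "finite J"
    and bound: "\<And>j. j \<in> J \<Longrightarrow> ti_norm p g (restr (block j) v) \<le> s j"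
    and IH: "\<And>v' J'. v' \<in> c00 \<Longrightarrow> finite J' \<Longrightarrow> supported_on J' v'
      \<Longrightarrow> (\<And>j. j \<in> J' \<Longrightarrow> ti_norm p g (restr (block j) v') \<le> s j)
      \<Longrightarrow> ti_iter p g m v' \<le> 3 powr inv_q * (\<Sum>j\<in>J'. s j powr p) powr (1/p)"
  defines "F \<equiv> inner_blocks J a b"
  shows "g * ti_iter p g m (restr (\<Union>(block ` F)) v) \<le> (\<Sum>j\<in>F. s j powr p) powr (1/p)"
proof -
  have restr_U: "restr (block j) (restr (\<Union>(block ` F)) v) = restr (block j) v" if "j \<in> F" for j
    using that unfolding restr_restr by (metis Int_absorb2 UN_upper)
  have "ti_iter p g m (restr (\<Union>(block ` F)) v) \<le> 3 powr inv_q * (\<Sum>j\<in>F. s j powr p) powr (1/p)"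
  proof (rule IH)
    show "restr (\<Union>(block ` F)) v \<in> c00" using v by (rule restr_in_c00)
    show "finite F"
      using J unfolding F_def inner_blocks_def by simp
    show "supported_on F (restr (\<Union>(block ` F)) v)"
      unfolding supported_on_def restr_def by auto
    show "ti_norm p g (restr (block j) (restr (\<Union>(block ` F)) v)) \<le> s j" if "j \<in> F" for j
      using that bound restr_U[OF that] unfolding F_def inner_blocks_def by auto
  qed
  then have "g * ti_iter p g m (restr (\<Union>(block ` F)) v) \<le> (g * 3 powr inv_q) * (\<Sum>j\<in>F. s j powr p) powr (1/p)"
    using g_pos by (simp add: mult.assoc)
  also have "\<dots> \<le> (\<Sum>j\<in>F. s j powr p) powr (1/p)"
    using g3 g_pos by (simp add: mult_left_le_one_le)
  finally show ?thesis .
qed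

(* Each interval of the family contains some blocks and cuts at most two others, so at most 2n
   pieces are cut in total; together with the n intervals this gives the constant 3. *)
lemma family_sum_le_block_estimate:
  assumes g3: "g * 3 powr inv_q \<le> 1" and adm: "adm n l r"
    and v: "v \<in> c00" and J: "finite J" and supp: "supported_on J v"
    and bound: "\<And>j. j \<in> J \<Longrightarrow> ti_norm p g (restr (block j) v) \<le> s j"
    and IH: "\<And>v' J'. v' \<in> c00 \<Longrightarrow> finite J' \<Longrightarrow> supported_on J' v'
      \<Longrightarrow> (\<And>j. j \<in> J' \<Longrightarrow> ti_norm p g (restr (block j) v') \<le> s j)
      \<Longrightarrow> ti_iter p g m v' \<le> 3 powr inv_q * (\<Sum>j\<in>J'. s j powr p) powr (1/p)"
  shows "g * (\<Sum>i<n. ti_iter p g m (restr {l i..r i} v))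
    \<le> 3 powr inv_q * (\<Sum>j\<in>J. s j powr p) powr (1/p) * real n powr inv_q"
proof -
  define F where "F i = inner_blocks J (l i) (r i)" for i
  define Q where "Q i = straddling_blocks J (l i) (r i)" for i
  define U where "U i = \<Union>(block ` F i)" for i
  define I where "I j = {i\<in>{..<n}. j \<in> Q i}" for j
  define P where "P i j = ti_iter p g m (restr ({l i..r i} \<inter> block j) v)" for i j
  have s_nonneg: "0 \<le> s j" if "j \<in> J" for j
    using ti_norm_nonneg[OF restr_in_c00[OF v]] bound[OF that] by (rule order_trans)
  have inner: "g * ti_iter p g m (restr (U i) v) \<le> (\<Sum>j\<in>F i. s j powr p) powr (1/p)" for i
    unfolding U_def F_def by (rule inner_part_le[OF g3 v J bound IH])
  have straddling: "g * (\<Sum>i\<in>I j. P i j) \<le> real (card (I j)) powr inv_q * s j" if "j \<in> J" for j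
    unfolding P_def using adm v bound[OF that]
    by (rule sum_straddling_pieces_le) (auto simp: I_def Q_def straddling_blocks_def)
  have "g * (\<Sum>i<n. ti_iter p g m (restr {l i..r i} v))
      \<le> g * (\<Sum>i<n. ti_iter p g m (restr (U i) v) + (\<Sum>j\<in>Q i. P i j))"
    using ti_iter_restr_interval_le[OF v J supp] g_pos
    unfolding U_def F_def Q_def P_def by (intro mult_left_mono sum_mono) auto
  also have "\<dots> = (\<Sum>i<n. g * ti_iter p g m (restr (U i) v)) + (\<Sum>j\<in>J. g * (\<Sum>i\<in>I j. P i j))"
    using J sum.swap_restrict[of "{..<n}" J "\<lambda>i j. P i j" "\<lambda>i j. j \<in> Q i"]
    by (simp add: sum.distrib sum_distrib_left distrib_left I_def Q_def straddling_blocks_def)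
  also have "\<dots> \<le> (\<Sum>i<n. (\<Sum>j\<in>F i. s j powr p) powr (1/p)) + (\<Sum>j\<in>J. real (card (I j)) powr inv_q * s j)"
    using inner straddling by (intro add_mono sum_mono) auto
  also have "\<dots> \<le> (2 * real n + card {..<n}) powr inv_q * (\<Sum>j\<in>J. s j powr p) powr (1/p)"
    unfolding inv_q_eq
  proof (subst add.commute, rule sum_powr_split_le)
    show "disjoint_family_on F {..<n}"
      unfolding F_def by (rule inner_blocks_disjoint[OF adm])
    show "real (card (I j)) = 0" if "i \<in> {..<n}" "j \<in> F i" for i j
      using inner_not_straddling[OF adm] that unfolding I_def F_def Q_def by fastforce
    show "(\<Sum>j\<in>J. real (card (I j))) \<le> 2 * real n"
      using sum_card_straddling_le[OF J, of n l r] unfolding I_def Q_def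
      by (simp flip: of_nat_sum)
  qed (use p_gt_1 J s_nonneg in \<open>auto simp: F_def inner_blocks_def\<close>)
  also have "\<dots> = 3 powr inv_q * (\<Sum>j\<in>J. s j powr p) powr (1/p) * real n powr inv_q"
    by (simp add: powr_mult mult.commute mult.left_commute)
  finally show ?thesis .
qed

lemma supnorm_le_block_estimate:
  assumes v: "v \<in> c00" and J: "finite J" and supp: "supported_on J v"
    and bound: "\<And>j. j \<in> J \<Longrightarrow> ti_norm p g (restr (block j) v) \<le> s j"
  shows "supnorm v \<le> 3 powr inv_q * (\<Sum>j\<in>J. s j powr p) powr (1/p)"
  unfolding supnorm_def[of v]
proof (rule cSUP_least)
  fix k
  have "\<bar>v k\<bar> \<le> (\<Sum>j\<in>J. s j powr p) powr (1/p)"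
  proof (cases "v k = 0")
    case False
    then obtain j where j: "j \<in> J" "k \<in> block j"
      using supp unfolding supported_on_def by auto
    have "\<bar>v k\<bar> = \<bar>restr (block j) v k\<bar>"
      using j by (simp add: restr_def)
    also have "\<dots> \<le> s j"
      using abs_le_ti_norm[OF restr_in_c00[OF v]] bound[OF j(1)] by (rule order_trans)
    also have "\<dots> = (s j powr p) powr (1/p)"
    proof -
      have "0 \<le> s j"
        using ti_norm_nonneg[OF restr_in_c00[OF v]] bound[OF j(1)] by (rule order_trans)
      then show ?thesis using p_gt_1 by (simp add: powr_powr)
    qed
    also have "\<dots> \<le> (\<Sum>j\<in>J. s j powr p) powr (1/p)"
      using p_gt_1 j J by (intro powr_mono2 member_le_sum) (auto simp: sum_nonneg)
    finally show ?thesis .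
  qed simp
  also have "\<dots> \<le> 3 powr inv_q * (\<Sum>j\<in>J. s j powr p) powr (1/p)"
  proof -
    have "1 \<le> (3::real) powr inv_q"
      using inv_q_pos by (intro ge_one_powr_ge_zero) auto
    then show ?thesis
      using mult_right_mono[of 1 "3 powr inv_q" "(\<Sum>j\<in>J. s j powr p) powr (1/p)"] by simp
  qed
  finally show "\<bar>v k\<bar> \<le> 3 powr inv_q * (\<Sum>j\<in>J. s j powr p) powr (1/p)" .
qed simp

lemma ti_iter_le_block_estimate:
  assumes g3: "g * 3 powr inv_q \<le> 1"
  shows "v \<in> c00 \<Longrightarrow> finite J \<Longrightarrow> supported_on J v
    \<Longrightarrow> (\<And>j. j \<in> J \<Longrightarrow> ti_norm p g (restr (block j) v) \<le> s j)
    \<Longrightarrow> ti_iter p g m v \<le> 3 powr inv_q * (\<Sum>j\<in>J. s j powr p) powr (1/p)"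
proof (induction m arbitrary: v J)
  case 0
  then show ?case by (simp add: supnorm_le_block_estimate)
next
  case (Suc m)
  let ?E = "3 powr inv_q * (\<Sum>j\<in>J. s j powr p) powr (1/p)"
  have "g * family_avg m v F \<le> ?E" if F_adm: "F \<in> adm_families" for F
  proof -
    obtain n l r where F: "F = (n, l, r)" and adm: "adm n l r"
      using F_adm unfolding adm_families_def by auto
    have pos: "0 < real n powr inv_q"
      using adm unfolding adm_def by simp
    have "g * family_avg m v F = g * (\<Sum>i<n. ti_iter p g m (restr {l i..r i} v)) / real n powr inv_q"
      unfolding F family_avg_def by simp
    also have "\<dots> \<le> ?E"
      using family_sum_le_block_estimate[OF g3 adm Suc.prems Suc.IH]
      by (simp only: pos_divide_le_eq[OF pos])
    finally show ?thesis .
  qed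
  then have "g * (SUP F\<in>adm_families. family_avg m v F) \<le> ?E"
    by (rule g_mult_SUP_family_avg_le)
  then show ?case
    using supnorm_le_block_estimate[OF Suc.prems] by (simp add: ti_iter_Suc)
qed

lemma ti_norm_le_block_estimate:
  assumes "g * 3 powr inv_q \<le> 1" "v \<in> c00" "finite J" "supported_on J v"
    "\<And>j. j \<in> J \<Longrightarrow> ti_norm p g (restr (block j) v) \<le> s j"
  shows "ti_norm p g v \<le> 3 powr inv_q * (\<Sum>j\<in>J. s j powr p) powr (1/p)"
  using ti_iter_le_block_estimate[OF assms] by (rule ti_norm_le)

lemma sum_block_combination_at:
  fixes c :: "nat \<Rightarrow> real"
  assumes y: "\<And>i k. y i k \<noteq> 0 \<Longrightarrow> k \<in> block i" and "j < n" "k \<in> block j"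
  shows "(\<Sum>i<n. c i * y i k) = c j * y j k"
proof -
  have "(\<Sum>i<n. c i * y i k) = c j * y j k + (\<Sum>i\<in>{..<n} - {j}. c i * y i k)"
    using assms(2) by (simp add: sum.remove)
  also have "(\<Sum>i\<in>{..<n} - {j}. c i * y i k) = 0"
  proof (rule sum.neutral, rule ballI)
    fix i assume "i \<in> {..<n} - {j}"
    then have "y i k = 0"
      using y block_unique[OF _ assms(3), of i] by blast
    then show "c i * y i k = 0" by simp
  qed
  finally show ?thesis by simp
qed

lemma supported_on_block_combination:
  assumes "\<And>i k. y i k \<noteq> 0 \<Longrightarrow> k \<in> block i"
  shows "supported_on {..<n} (\<lambda>k. \<Sum>j<n. c j * y j k)"
  unfolding supported_on_def
proof (intro allI impI)
  fix k assume "(\<Sum>j<n. c j * y j k) \<noteq> 0"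
  then obtain j where "j \<in> {..<n}" "c j * y j k \<noteq> 0"
    by (rule sum.not_neutral_contains_not_neutral)
  then show "\<exists>j\<in>{..<n}. k \<in> block j"
    using assms by auto
qed

lemma finite_support_block_combination:
  fixes c :: "nat \<Rightarrow> real"
  assumes "\<And>i k. y i k \<noteq> 0 \<Longrightarrow> k \<in> block i"
  shows "finite {k. (\<Sum>j<n. c j * y j k) \<noteq> 0}"
proof -
  have "{k. (\<Sum>j<n. c j * y j k) \<noteq> 0} \<subseteq> (\<Union>j<n. block j)"
    using supported_on_block_combination[OF assms, where n = n and c = c]
    unfolding supported_on_def by blast
  then show ?thesis
    by (rule finite_subset) (simp add: block_def)
qed

lemma dual_pairing_block_combinations:
  assumes x: "\<And>j k. x j k \<noteq> 0 \<Longrightarrow> k \<in> block j" and y: "\<And>j k. y j k \<noteq> 0 \<Longrightarrow> k \<in> block j"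
  shows "dual_pairing (\<lambda>k. \<Sum>j<n. a j * x j k) (\<lambda>k. \<Sum>j<n. c j * y j k)
    = (\<Sum>j<n. a j * c j * dual_pairing (x j) (y j))"
proof -
  have block_fin: "finite (block j)" for j
    unfolding block_def by simp
  have "{k. (\<Sum>j<n. a j * x j k) \<noteq> 0} \<subseteq> (\<Union>j<n. block j)"
    using supported_on_block_combination[OF x, where n = n and c = a] unfolding supported_on_def by auto
  then have "dual_pairing (\<lambda>k. \<Sum>j<n. a j * x j k) (\<lambda>k. \<Sum>j<n. c j * y j k)
      = (\<Sum>k\<in>(\<Union>j<n. block j). (\<Sum>j<n. a j * x j k) * (\<Sum>j<n. c j * y j k))"
    using block_fin by (intro dual_pairing_eq_sum) auto
  also have "\<dots> = (\<Sum>j<n. \<Sum>k\<in>block j. (\<Sum>j<n. a j * x j k) * (\<Sum>j<n. c j * y j k))"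
    using block_fin block_unique by (intro sum.UNION_disjoint) blast+
  also have "\<dots> = (\<Sum>j<n. \<Sum>k\<in>block j. a j * c j * (x j k * y j k))"
    using x y by (intro sum.cong refl) (simp add: sum_block_combination_at mult_ac)
  also have "\<dots> = (\<Sum>j<n. a j * c j * dual_pairing (x j) (y j))"
  proof (rule sum.cong[OF refl])
    fix j
    have "dual_pairing (x j) (y j) = (\<Sum>k\<in>block j. x j k * y j k)"
      using x block_fin by (intro dual_pairing_eq_sum) auto
    then show "(\<Sum>k\<in>block j. a j * c j * (x j k * y j k)) = a j * c j * dual_pairing (x j) (y j)"
      by (simp add: sum_distrib_left)
  qed
  finally show ?thesis .
qed

lemma ti_norm_block_combination_le:
  assumes g3: "g * 3 powr inv_q \<le> 1"
    and y: "\<And>j. y j \<in> c00" "\<And>j k. y j k \<noteq> 0 \<Longrightarrow> k \<in> block j" "\<And>j. ti_norm p g (y j) \<le> 1"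
  shows "ti_norm p g (\<lambda>k. \<Sum>j<n. c j * y j k) \<le> 3 powr inv_q * (\<Sum>j<n. \<bar>c j\<bar> powr p) powr (1/p)"
proof -
  let ?w = "\<lambda>k. \<Sum>j<n. c j * y j k"
  have "ti_norm p g (restr (block j) ?w) \<le> \<bar>c j\<bar>" if "j \<in> {..<n}" for j
  proof (rule ti_norm_le)
    fix m
    have pointwise: "\<bar>restr (block j) ?w k\<bar> \<le> \<bar>c j\<bar> * \<bar>y j k\<bar>" for k
    proof (cases "k \<in> block j")
      case True
      then have "?w k = c j * y j k"
        using that by (intro sum_block_combination_at[OF y(2)]) auto
      then show ?thesis
        using True by (simp add: restr_def abs_mult)
    qed (simp add: restr_def)
    have "ti_iter p g m (restr (block j) ?w) \<le> \<bar>c j\<bar> * ti_iter p g m (y j)"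
      by (rule ti_iter_le_scaled[OF y(1) abs_ge_zero pointwise])
    also have "\<dots> \<le> \<bar>c j\<bar>"
    proof -
      have "ti_iter p g m (y j) \<le> 1"
        using ti_iter_le_ti_norm[OF y(1)] y(3) by (rule order_trans)
      then show ?thesis
        by (simp add: mult_left_le)
    qed
    finally show "ti_iter p g m (restr (block j) ?w) \<le> \<bar>c j\<bar>" .
  qed
  moreover have "?w \<in> c00"
    using y(1) by (rule sum_in_c00[OF finite_lessThan])
  moreover have "supported_on {..<n} ?w"
    using y(2) by (rule supported_on_block_combination)
  ultimately show ?thesis
    using ti_norm_le_block_estimate[OF g3, of ?w "{..<n}" "\<lambda>j. \<bar>c j\<bar>"] by simp
qed

lemma exists_norming_vectors_on_blocks:
  assumes x: "\<And>j k. x j k \<noteq> 0 \<Longrightarrow> k \<in> block j" and z: "\<And>j. z < ti_dual_norm p g (x j)"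
  shows "\<exists>y. \<forall>j. y j \<in> c00 \<and> ti_norm p g (y j) \<le> 1 \<and> (\<forall>k. y j k \<noteq> 0 \<longrightarrow> k \<in> block j)
    \<and> z < \<bar>dual_pairing (x j) (y j)\<bar>"
proof -
  have "\<exists>y. y \<in> c00 \<and> ti_norm p g y \<le> 1 \<and> (\<forall>k. y k \<noteq> 0 \<longrightarrow> k \<in> block j)
      \<and> z < \<bar>dual_pairing (x j) y\<bar>" for j
  proof -
    have "{k. x j k \<noteq> 0} \<subseteq> block j"
      using x by blast
    then have "finite {k. x j k \<noteq> 0}"
      by (rule finite_subset) (simp add: block_def)
    then obtain b where b: "b \<in> c00" "ti_norm p g b \<le> 1" "z < \<bar>dual_pairing (x j) b\<bar>"
      using z by (rule exists_norming_vector)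
    have "dual_pairing (x j) (restr (block j) b) = dual_pairing (x j) b"
      unfolding dual_pairing_def restr_def using x by (intro sum.cong) auto
    then show ?thesis
      using b restr_in_c00[OF b(1), of "block j"] ti_norm_restr_le[OF b(1), of "block j"]
      by (intro exI[of _ "restr (block j) b"]) (auto simp: restr_def split: if_splits)
  qed
  then show ?thesis
    by (intro choice allI)
qed

lemma ti_dual_norm_block_combination_ge:
  assumes g3: "g * 3 powr inv_q \<le> 1"
    and x: "\<And>j k. x j k \<noteq> 0 \<Longrightarrow> k \<in> block j" and normalized: "\<And>j. ti_dual_norm p g (x j) = 1"
  shows "1 / 3 powr inv_q * (\<Sum>j<n. \<bar>a j\<bar> powr conj_exp p) powr inv_q
    \<le> ti_dual_norm p g (\<lambda>k. \<Sum>j<n. a j * x j k)"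
proof (rule field_le_mult_one_interval)
  fix z :: real assume z: "0 < z" "z < 1"
  define q where "q = conj_exp p"
  define A where "A = (\<Sum>j<n. \<bar>a j\<bar> powr q)"
  define D where "D = ti_dual_norm p g (\<lambda>k. \<Sum>j<n. a j * x j k)"
  have \<phi>_fin: "finite {k. (\<Sum>j<n. a j * x j k) \<noteq> 0}"
    using x by (rule finite_support_block_combination)
  obtain y where "\<forall>j. y j \<in> c00 \<and> ti_norm p g (y j) \<le> 1 \<and> (\<forall>k. y j k \<noteq> 0 \<longrightarrow> k \<in> block j)
      \<and> z < \<bar>dual_pairing (x j) (y j)\<bar>"
    using exists_norming_vectors_on_blocks[where x = x and z = z, OF x] normalized z by auto
  then have y: "\<And>j. y j \<in> c00" "\<And>j. ti_norm p g (y j) \<le> 1" "\<And>j k. y j k \<noteq> 0 \<Longrightarrow> k \<in> block j"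
      "\<And>j. z < \<bar>dual_pairing (x j) (y j)\<bar>"
    by blast+
  define \<pi> where "\<pi> j = dual_pairing (x j) (y j)" for j
  \<comment> \<open>Hoelder-extremal coefficients: \<open>a j * c j * \<pi> j = \<bar>a j\<bar> powr q * \<bar>\<pi> j\<bar>\<close> and \<open>\<bar>c j\<bar> powr p = \<bar>a j\<bar> powr q\<close>.\<close>
  define c where "c j = sgn (a j * \<pi> j) * \<bar>a j\<bar> powr (q - 1)" for j
  define w where "w k = (\<Sum>j<n. c j * y j k)" for k
  have w_norm: "ti_norm p g w \<le> 3 powr inv_q * A powr (1/p)"
  proof -
    have "\<bar>c j\<bar> powr p = \<bar>a j\<bar> powr q" for j
      unfolding c_def q_def using p_gt_1 y(4)[of j] z
      by (intro abs_sgn_mult_powr_conj_exp) (auto simp: \<pi>_def)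
    then show ?thesis
      using ti_norm_block_combination_le[OF g3 y(1,3,2), where n = n and c = c]
      unfolding w_def A_def by simp
  qed
  have D_nonneg: "0 \<le> D"
    unfolding D_def using \<phi>_fin by (rule ti_dual_norm_nonneg)
  have "z * A \<le> (\<Sum>j<n. \<bar>a j\<bar> powr q * \<bar>\<pi> j\<bar>)"
    unfolding A_def sum_distrib_left
  proof (rule sum_mono)
    fix j
    have "z \<le> \<bar>\<pi> j\<bar>"
      using y(4)[of j] unfolding \<pi>_def by simp
    then show "z * \<bar>a j\<bar> powr q \<le> \<bar>a j\<bar> powr q * \<bar>\<pi> j\<bar>"
      using mult_left_mono[of z "\<bar>\<pi> j\<bar>" "\<bar>a j\<bar> powr q"] by (simp add: mult.commute)
  qed
  also have "\<dots> = (\<Sum>j<n. a j * c j * \<pi> j)"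
    unfolding c_def by (simp only: mult_sgn_mult_abs_powr)
  also have "\<dots> = dual_pairing (\<lambda>k. \<Sum>j<n. a j * x j k) w"
    unfolding w_def \<pi>_def by (rule dual_pairing_block_combinations[OF x y(3), symmetric])
  also have "\<dots> \<le> D * ti_norm p g w"
    unfolding D_def w_def using \<phi>_fin sum_in_c00[OF finite_lessThan y(1)]
    by (rule order_trans[OF abs_ge_self abs_dual_pairing_le])
  also have "\<dots> \<le> D * (3 powr inv_q * A powr (1/p))"
    using w_norm D_nonneg by (rule mult_left_mono)
  finally have "z * A \<le> D * (3 powr inv_q * A powr (1/p))" .
  then have "z * (1 / 3 powr inv_q * A powr (1 - 1/p)) \<le> D"
    by (rule mult_powr_le_cancel) (simp_all add: A_def sum_nonneg D_nonneg)
  then show "z * (1 / 3 powr inv_q * (\<Sum>j<n. \<bar>a j\<bar> powr conj_exp p) powr inv_q) \<le> D"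
    unfolding A_def q_def by (simp only: inv_q_eq)
qed

end

lemma is_block_basis_blocks:
  assumes "is_block_basis x"
  shows "\<exists>bl br. blocks bl br \<and> (\<forall>j k. x j k \<noteq> 0 \<longrightarrow> k \<in> {bl j..br j})"
proof -
  obtain pp where pp: "strict_mono pp" and supp: "\<And>j k. x j k \<noteq> 0 \<Longrightarrow> pp j < k \<and> k \<le> pp (Suc j)"
    using assms unfolding is_block_basis_def by blast
  have "blocks (\<lambda>j. Suc (pp j)) (\<lambda>j. pp (Suc j))"
  proof
    show "Suc (pp j) \<le> pp (Suc j)" for j
      using pp by (simp add: Suc_leI strict_monoD)
    show "pp (Suc j) < Suc (pp j')" if "j < j'" for j j'
      using pp that by (simp add: less_Suc_eq_le strict_mono_less_eq)
  qed
  moreover have "k \<in> {Suc (pp j)..pp (Suc j)}" if "x j k \<noteq> 0" for j k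
    using supp[OF that] by auto
  ultimately show ?thesis by blast
qed

theorem lemma4:
  fixes p \<gamma> :: real and x :: "nat \<Rightarrow> nat \<Rightarrow> real"
  assumes "1 < p"
    and "0 < \<gamma>" and "\<gamma> < 3 powr (- 1 / conj_exp p)"
    and "is_block_basis x"
    and "\<forall>j. ti_dual_norm p \<gamma> (x j) = 1"
  shows "\<forall>(n::nat) (a::nat \<Rightarrow> real).
    ti_dual_norm p \<gamma> (\<lambda>k. \<Sum>j<n. a j * x j k)
      \<ge> (1 / 3 powr (1 / conj_exp p)) * (\<Sum>j<n. \<bar>a j\<bar> powr conj_exp p) powr (1 / conj_exp p)"
proof (intro allI)
  fix n a
  obtain bl br where blocks: "blocks bl br" and x_blocks: "\<forall>j k. x j k \<noteq> 0 \<longrightarrow> k \<in> {bl j..br j}"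
    using is_block_basis_blocks[OF assms(4)] by blast
  have "1 \<le> 3 powr (1 / conj_exp p)"
    using assms(1) by (intro ge_one_powr_ge_zero) (auto simp: conj_exp_def)
  then have "\<gamma> \<le> \<gamma> * 3 powr (1 / conj_exp p)"
    using assms(2) by simp
  moreover have g3: "\<gamma> * 3 powr (1 / conj_exp p) < 1"
    using assms(3) by (simp add: powr_minus_divide pos_less_divide_eq)
  ultimately have "\<gamma> \<le> 1"
    by linarith
  then interpret tirilman_blocks p \<gamma> bl br
    using assms(1,2) blocks by (simp add: tirilman_blocks_def tirilman_def)
  show "ti_dual_norm p \<gamma> (\<lambda>k. \<Sum>j<n. a j * x j k)
      \<ge> 1 / 3 powr (1 / conj_exp p) * (\<Sum>j<n. \<bar>a j\<bar> powr conj_exp p) powr (1 / conj_exp p)"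
    using ti_dual_norm_block_combination_ge[where x = x and n = n and a = a] g3 x_blocks assms(5)
    unfolding inv_q_def block_def by simp
qed

end
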